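(* If $\mathcal{F}: (\mathbb{X}, \dagger) \to (\mathbb{Y}, \dagger)$ is a dagger additive functor, then for any object $X \in \mathbb{X}$, $\mathfrak{G}[\mathcal{F}]_X: \mathfrak{G}\left[ (\mathbb{X}, \dagger) \right]_{X} \to \mathfrak{G}\left[ (\mathbb{X}, \dagger) \right]_{\mathcal{F}(X)}$ is a Markov functor.
   Context: Let $(\mathbb{X}, \dagger)$ and $(\mathbb{Y}, \dagger)$ be dagger additive categories (dagger categories enriched in abelian groups with additive dagger and finite biproducts satisfying $\pi_j^\dagger = \iota_j$). A map $p: B \to B$ is $\dagger$-positive if $p = \phi^\dagger \circ \phi$ for some $\phi$. For an object $X$, the Gauss construction $\mathfrak{G}\left[ (\mathbb{X}, \dagger) \right]_X$ is the Markov category with the objects of $\mathbb{X}$, maps $A \to B$ the triples $(f,p,x)$ with $f: A \to B$, $p: B \to B$ $\dagger$-positive, $x: X \to B$; identities $(\mathsf{id}_A,0,0)$; composition $(g,q,y) \circ (f,p,x) = (g \circ f, q + g \circ p \circ g^\dagger, y + g \circ x)$; monoidal product $A \oplus B$, $(f,p,x) \otimes (g,q,y) = \left(f \oplus g, p \oplus q, \begin{bmatrix} x \\ y \end{bmatrix}\right)$, unit the zero object, copy $\left(\begin{bmatrix} \mathsf{id}_A \\ \mathsf{id}_A \end{bmatrix}, 0, 0\right)$ and delete $(0,0,0)$. A dagger additive functor is a functor $\mathcal{F}: \mathbb{X} \to \mathbb{Y}$ that preserves the dagger ($\mathcal{F}(f^\dagger) = \mathcal{F}(f)^\dagger$) and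 preserves finite biproducts (equivalently, the abelian group structure of homsets). A Markov functor is a strong symmetric monoidal functor preserving the comonoid structure (up to the monoidal isomorphisms). The functor $\mathfrak{G}[\mathcal{F}]_X$ is defined on objects by $A \mapsto \mathcal{F}(A)$ and on maps by $(f,p,x) \mapsto (\mathcal{F}(f), \mathcal{F}(p), \mathcal{F}(x))$, with codomain $\mathfrak{G}\left[ (\mathbb{Y}, \dagger) \right]_{\mathcal{F}(X)}$. *)

theory Defs
  imports Main
begin

record ('o,'m) cat =
  cObj  :: "'o set"
  cHom  :: "'o \<Rightarrow> 'o \<Rightarrow> 'm set"
  cId   :: "'o \<Rightarrow> 'm"
  cComp :: "'m \<Rightarrow> 'm \<Rightarrow> 'm"   (* cComp C g f = g \<circ> f *)

definition is_category :: "('o,'m,'x) cat_scheme \<Rightarrow> bool" where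
  "is_category C \<longleftrightarrow>
     (\<forall>A\<in>cObj C. cId C A \<in> cHom C A A) \<and>
     (\<forall>A\<in>cObj C. \<forall>B\<in>cObj C. \<forall>D\<in>cObj C. \<forall>f g.
        f \<in> cHom C A B \<longrightarrow> g \<in> cHom C B D \<longrightarrow> cComp C g f \<in> cHom C A D) \<and>
     (\<forall>A\<in>cObj C. \<forall>B\<in>cObj C. \<forall>D\<in>cObj C. \<forall>E\<in>cObj C. \<forall>f g h.
        f \<in> cHom C A B \<longrightarrow> g \<in> cHom C B D \<longrightarrow> h \<in> cHom C D E \<longrightarrow>
        cComp C h (cComp C g f) = cComp C (cComp C h g) f) \<and>
     (\<forall>A\<in>cObj C. \<forall>B\<in>cObj C. \<forall>f. f \<in> cHom C A B \<longrightarrow>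
        cComp C (cId C B) f = f \<and> cComp C f (cId C A) = f)"

record ('o,'m) dacat = "('o,'m) cat" +
  dAdd  :: "'m \<Rightarrow> 'm \<Rightarrow> 'm"
  dNeg  :: "'m \<Rightarrow> 'm"
  dZero :: "'o \<Rightarrow> 'o \<Rightarrow> 'm"
  dDag  :: "'m \<Rightarrow> 'm"
  dZObj :: "'o"
  dBp   :: "'o \<Rightarrow> 'o \<Rightarrow> 'o"
  dIn1  :: "'o \<Rightarrow> 'o \<Rightarrow> 'm"
  dIn2  :: "'o \<Rightarrow> 'o \<Rightarrow> 'm"
  dPr1  :: "'o \<Rightarrow> 'o \<Rightarrow> 'm"
  dPr2  :: "'o \<Rightarrow> 'o \<Rightarrow> 'm"

definition is_dagger_additive :: "('o,'m) dacat \<Rightarrow> bool" where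
  "is_dagger_additive C \<longleftrightarrow> is_category C \<and>
     \<comment> \<open>enrichment in abelian groups\<close>
     (\<forall>A\<in>cObj C. \<forall>B\<in>cObj C.
        dZero C A B \<in> cHom C A B \<and>
        (\<forall>f\<in>cHom C A B. \<forall>g\<in>cHom C A B. dAdd C f g \<in> cHom C A B \<and> dAdd C f g = dAdd C g f) \<and>
        (\<forall>f\<in>cHom C A B. \<forall>g\<in>cHom C A B. \<forall>h\<in>cHom C A B.
            dAdd C (dAdd C f g) h = dAdd C f (dAdd C g h)) \<and>
        (\<forall>f\<in>cHom C A B. dAdd C (dZero C A B) f = f) \<and>
        (\<forall>f\<in>cHom C A B. dNeg C f \<in> cHom C A B \<and> dAdd C f (dNeg C f) = dZero C A B)) \<and>
     \<comment> \<open>bilinearity of composition\<close>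
     (\<forall>A\<in>cObj C. \<forall>B\<in>cObj C. \<forall>D\<in>cObj C.
        \<forall>f\<in>cHom C A B. \<forall>f'\<in>cHom C A B. \<forall>g\<in>cHom C B D. \<forall>g'\<in>cHom C B D.
          cComp C (dAdd C g g') f = dAdd C (cComp C g f) (cComp C g' f) \<and>
          cComp C g (dAdd C f f') = dAdd C (cComp C g f) (cComp C g f')) \<and>
     \<comment> \<open>additive dagger\<close>
     (\<forall>A\<in>cObj C. \<forall>B\<in>cObj C. \<forall>f\<in>cHom C A B.
        dDag C f \<in> cHom C B A \<and> dDag C (dDag C f) = f) \<and>
     (\<forall>A\<in>cObj C. dDag C (cId C A) = cId C A) \<and>
     (\<forall>A\<in>cObj C. \<forall>B\<in>cObj C. \<forall>D\<in>cObj C. \<forall>f\<in>cHom C A B. \<forall>g\<in>cHom C B D.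
        dDag C (cComp C g f) = cComp C (dDag C f) (dDag C g)) \<and>
     (\<forall>A\<in>cObj C. \<forall>B\<in>cObj C. \<forall>f\<in>cHom C A B. \<forall>g\<in>cHom C A B.
        dDag C (dAdd C f g) = dAdd C (dDag C f) (dDag C g)) \<and>
     \<comment> \<open>zero object\<close>
     dZObj C \<in> cObj C \<and> cId C (dZObj C) = dZero C (dZObj C) (dZObj C) \<and>
     \<comment> \<open>binary biproducts, with \<pi>_j^\<dagger> = \<iota>_j\<close>
     (\<forall>A\<in>cObj C. \<forall>B\<in>cObj C.
        dBp C A B \<in> cObj C \<and>
        dIn1 C A B \<in> cHom C A (dBp C A B) \<and> dIn2 C A B \<in> cHom C B (dBp C A B) \<and>
        dPr1 C A B \<in> cHom C (dBp C A B) A \<and> dPr2 C A B \<in> cHom C (dBp C A B) B \<and>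
        cComp C (dPr1 C A B) (dIn1 C A B) = cId C A \<and>
        cComp C (dPr2 C A B) (dIn2 C A B) = cId C B \<and>
        cComp C (dPr1 C A B) (dIn2 C A B) = dZero C B A \<and>
        cComp C (dPr2 C A B) (dIn1 C A B) = dZero C A B \<and>
        dAdd C (cComp C (dIn1 C A B) (dPr1 C A B)) (cComp C (dIn2 C A B) (dPr2 C A B))
          = cId C (dBp C A B) \<and>
        dDag C (dPr1 C A B) = dIn1 C A B \<and> dDag C (dPr2 C A B) = dIn2 C A B)"

definition tup :: "('o,'m) dacat \<Rightarrow> 'o \<Rightarrow> 'o \<Rightarrow> 'm \<Rightarrow> 'm \<Rightarrow> 'm" where
  "tup C A B f g = dAdd C (cComp C (dIn1 C A B) f) (cComp C (dIn2 C A B) g)"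

definition cotup :: "('o,'m) dacat \<Rightarrow> 'o \<Rightarrow> 'o \<Rightarrow> 'm \<Rightarrow> 'm \<Rightarrow> 'm" where
  "cotup C A B f g = dAdd C (cComp C f (dPr1 C A B)) (cComp C g (dPr2 C A B))"

definition bpmap :: "('o,'m) dacat \<Rightarrow> 'o \<Rightarrow> 'o \<Rightarrow> 'o \<Rightarrow> 'o \<Rightarrow> 'm \<Rightarrow> 'm \<Rightarrow> 'm" where
  "bpmap C A B A' B' f g =
     dAdd C (cComp C (dIn1 C A' B') (cComp C f (dPr1 C A B)))
            (cComp C (dIn2 C A' B') (cComp C g (dPr2 C A B)))"

definition dagger_positive :: "('o,'m) dacat \<Rightarrow> 'o \<Rightarrow> 'm \<Rightarrow> bool" where
  "dagger_positive C B p \<longleftrightarrow>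
     (\<exists>D\<in>cObj C. \<exists>\<phi>\<in>cHom C B D. p = cComp C (dDag C \<phi>) \<phi>)"

definition is_dagger_additive_functor ::
  "('o,'m) dacat \<Rightarrow> ('p,'n) dacat \<Rightarrow> ('o \<Rightarrow> 'p) \<Rightarrow> ('m \<Rightarrow> 'n) \<Rightarrow> bool" where
  "is_dagger_additive_functor C D Fo Fm \<longleftrightarrow>
     (\<forall>A\<in>cObj C. Fo A \<in> cObj D) \<and>
     (\<forall>A\<in>cObj C. \<forall>B\<in>cObj C. \<forall>f\<in>cHom C A B. Fm f \<in> cHom D (Fo A) (Fo B)) \<and>
     (\<forall>A\<in>cObj C. Fm (cId C A) = cId D (Fo A)) \<and>
     (\<forall>A\<in>cObj C. \<forall>B\<in>cObj C. \<forall>E\<in>cObj C. \<forall>f\<in>cHom C A B. \<forall>g\<in>cHom C B E.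
        Fm (cComp C g f) = cComp D (Fm g) (Fm f)) \<and>
     (\<forall>A\<in>cObj C. \<forall>B\<in>cObj C. \<forall>f\<in>cHom C A B. Fm (dDag C f) = dDag D (Fm f)) \<and>
     (\<forall>A\<in>cObj C. \<forall>B\<in>cObj C. \<forall>f\<in>cHom C A B. \<forall>g\<in>cHom C A B.
        Fm (dAdd C f g) = dAdd D (Fm f) (Fm g))"

record ('o,'m) mcat = "('o,'m) cat" +
  mTens  :: "'o \<Rightarrow> 'o \<Rightarrow> 'o"
  mTensM :: "'o \<Rightarrow> 'o \<Rightarrow> 'o \<Rightarrow> 'o \<Rightarrow> 'm \<Rightarrow> 'm \<Rightarrow> 'm"
     (* mTensM A B A' B' f g = f \<otimes> g : A \<otimes> B \<rightarrow> A' \<otimes> B'  for f : A \<rightarrow> A', g : B \<rightarrow> B' *)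
  mUnit  :: "'o"
  mAssoc :: "'o \<Rightarrow> 'o \<Rightarrow> 'o \<Rightarrow> 'm"  (* (A \<otimes> B) \<otimes> E \<rightarrow> A \<otimes> (B \<otimes> E) *)
  mLUnit :: "'o \<Rightarrow> 'm"
  mRUnit :: "'o \<Rightarrow> 'm"
  mSym   :: "'o \<Rightarrow> 'o \<Rightarrow> 'm"
  mCopy  :: "'o \<Rightarrow> 'm"
  mDel   :: "'o \<Rightarrow> 'm"

definition is_iso :: "('o,'m) mcat \<Rightarrow> 'o \<Rightarrow> 'o \<Rightarrow> 'm \<Rightarrow> bool" where
  "is_iso C A B f \<longleftrightarrow> f \<in> cHom C A B \<and>
     (\<exists>g\<in>cHom C B A. cComp C g f = cId C A \<and> cComp C f g = cId C B)"

definition is_markov_functor ::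
  "('o,'m) mcat \<Rightarrow> ('p,'n) mcat \<Rightarrow> ('o \<Rightarrow> 'p) \<Rightarrow> ('m \<Rightarrow> 'n) \<Rightarrow> bool" where
  "is_markov_functor C D Fo Fm \<longleftrightarrow>
     \<comment> \<open>functor\<close>
     (\<forall>A\<in>cObj C. Fo A \<in> cObj D) \<and>
     (\<forall>A\<in>cObj C. \<forall>B\<in>cObj C. \<forall>f\<in>cHom C A B. Fm f \<in> cHom D (Fo A) (Fo B)) \<and>
     (\<forall>A\<in>cObj C. Fm (cId C A) = cId D (Fo A)) \<and>
     (\<forall>A\<in>cObj C. \<forall>B\<in>cObj C. \<forall>E\<in>cObj C. \<forall>f\<in>cHom C A B. \<forall>g\<in>cHom C B E.
        Fm (cComp C g f) = cComp D (Fm g) (Fm f)) \<and>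
     (\<exists>\<phi> \<phi>0.
        \<comment> \<open>structure isomorphisms\<close>
        is_iso D (mUnit D) (Fo (mUnit C)) \<phi>0 \<and>
        (\<forall>A\<in>cObj C. \<forall>B\<in>cObj C.
           is_iso D (mTens D (Fo A) (Fo B)) (Fo (mTens C A B)) (\<phi> A B)) \<and>
        \<comment> \<open>naturality\<close>
        (\<forall>A\<in>cObj C. \<forall>B\<in>cObj C. \<forall>A'\<in>cObj C. \<forall>B'\<in>cObj C.
           \<forall>f\<in>cHom C A A'. \<forall>g\<in>cHom C B B'.
             cComp D (Fm (mTensM C A B A' B' f g)) (\<phi> A B) =
             cComp D (\<phi> A' B') (mTensM D (Fo A) (Fo B) (Fo A') (Fo B') (Fm f) (Fm g))) \<and>
        \<comment> \<open>associativity\<close>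
        (\<forall>A\<in>cObj C. \<forall>B\<in>cObj C. \<forall>E\<in>cObj C.
           cComp D (Fm (mAssoc C A B E))
             (cComp D (\<phi> (mTens C A B) E)
               (mTensM D (mTens D (Fo A) (Fo B)) (Fo E) (Fo (mTens C A B)) (Fo E)
                  (\<phi> A B) (cId D (Fo E)))) =
           cComp D (\<phi> A (mTens C B E))
             (cComp D (mTensM D (Fo A) (mTens D (Fo B) (Fo E)) (Fo A) (Fo (mTens C B E))
                         (cId D (Fo A)) (\<phi> B E))
               (mAssoc D (Fo A) (Fo B) (Fo E)))) \<and>
        \<comment> \<open>unitality\<close>
        (\<forall>A\<in>cObj C.
           cComp D (Fm (mLUnit C A))
             (cComp D (\<phi> (mUnit C) A)
               (mTensM D (mUnit D) (Fo A) (Fo (mUnit C)) (Fo A) \<phi>0 (cId D (Fo A))))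
           = mLUnit D (Fo A)) \<and>
        (\<forall>A\<in>cObj C.
           cComp D (Fm (mRUnit C A))
             (cComp D (\<phi> A (mUnit C))
               (mTensM D (Fo A) (mUnit D) (Fo A) (Fo (mUnit C)) (cId D (Fo A)) \<phi>0))
           = mRUnit D (Fo A)) \<and>
        \<comment> \<open>symmetry\<close>
        (\<forall>A\<in>cObj C. \<forall>B\<in>cObj C.
           cComp D (Fm (mSym C A B)) (\<phi> A B) = cComp D (\<phi> B A) (mSym D (Fo A) (Fo B))) \<and>
        \<comment> \<open>preservation of the comonoid structure\<close>
        (\<forall>A\<in>cObj C. Fm (mCopy C A) = cComp D (\<phi> A A) (mCopy D (Fo A))) \<and>
        (\<forall>A\<in>cObj C. Fm (mDel C A) = cComp D \<phi>0 (mDel D (Fo A))))"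

definition gauss :: "('o,'m) dacat \<Rightarrow> 'o \<Rightarrow> ('o, 'm \<times> 'm \<times> 'm) mcat" where
  "gauss C X = \<lparr>
     cObj = cObj C,
     cHom = (\<lambda>A B. {(f,p,x). f \<in> cHom C A B \<and> p \<in> cHom C B B \<and> dagger_positive C B p
                                \<and> x \<in> cHom C X B}),
     cId = (\<lambda>A. (cId C A, dZero C A A, dZero C X A)),
     cComp = (\<lambda>(g,q,y) (f,p,x).
                (cComp C g f,
                 dAdd C q (cComp C g (cComp C p (dDag C g))),
                 dAdd C y (cComp C g x))),
     mTens = dBp C,
     mTensM = (\<lambda>A B A' B' (f,p,x) (g,q,y).
                 (bpmap C A B A' B' f g, bpmap C A' B' A' B' p q, tup C A' B' x y)),
     mUnit = dZObj C,
     mAssoc = (\<lambda>A B E.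
        (tup C A (dBp C B E)
             (cComp C (dPr1 C A B) (dPr1 C (dBp C A B) E))
             (tup C B E (cComp C (dPr2 C A B) (dPr1 C (dBp C A B) E)) (dPr2 C (dBp C A B) E)),
         dZero C (dBp C A (dBp C B E)) (dBp C A (dBp C B E)),
         dZero C X (dBp C A (dBp C B E)))),
     mLUnit = (\<lambda>A. (dPr2 C (dZObj C) A, dZero C A A, dZero C X A)),
     mRUnit = (\<lambda>A. (dPr1 C A (dZObj C), dZero C A A, dZero C X A)),
     mSym = (\<lambda>A B. (tup C B A (dPr2 C A B) (dPr1 C A B),
                     dZero C (dBp C B A) (dBp C B A), dZero C X (dBp C B A))),
     mCopy = (\<lambda>A. (tup C A A (cId C A) (cId C A),
                    dZero C (dBp C A A) (dBp C A A), dZero C X (dBp C A A))),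
     mDel = (\<lambda>A. (dZero C A (dZObj C), dZero C (dZObj C) (dZObj C), dZero C X (dZObj C)))
   \<rparr>"

definition gauss_map :: "('m \<Rightarrow> 'n) \<Rightarrow> 'm \<times> 'm \<times> 'm \<Rightarrow> 'n \<times> 'n \<times> 'n" where
  "gauss_map Fm = (\<lambda>(f,p,x). (Fm f, Fm p, Fm x))"

end

theory Submission
  imports Defs
begin

(* A dagger additive functor F preserves zero maps (the idempotents of the hom groups), hence
   dagger-positive maps, so (f, p, x) \<mapsto> (F f, F p, F x) is a functor between the Gauss categories.
   Since F preserves sums it preserves biproducts up to the comparison
   \<phi> = F \<iota>\<^sub>1 \<circ> \<pi>\<^sub>1 + F \<iota>\<^sub>2 \<circ> \<pi>\<^sub>2 : F A \<oplus> F B \<rightarrow> F (A \<oplus> B),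
   whose inverse \<iota>\<^sub>1 \<circ> F \<pi>\<^sub>1 + \<iota>\<^sub>2 \<circ> F \<pi>\<^sub>2 is also its dagger.  The noise-free maps (\<phi>, 0, 0)
   serve as the monoidal structure isomorphisms.  All structure maps of the Gauss construction are
   noise-free, and noise-free maps compose and tensor through their first components, so each
   coherence condition becomes an identity in the underlying category, checked on biproduct
   components; in the naturality condition, unitarity of \<phi> transports the noise term
   F (p \<oplus> q) = \<phi> \<circ> (F p \<oplus> F q) \<circ> \<phi>\<^sup>\<dagger>. *)

(* Composition, sum and dagger annotated with the objects involved, so that rewrite rules can
   determine the objects of the zero maps they produce. *)
definition tcomp :: "('o,'m) dacat \<Rightarrow> 'o \<Rightarrow> 'o \<Rightarrow> 'o \<Rightarrow> 'm \<Rightarrow> 'm \<Rightarrow> 'm" where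
  "tcomp C A B E g f = cComp C g f"

definition tadd :: "('o,'m) dacat \<Rightarrow> 'o \<Rightarrow> 'o \<Rightarrow> 'm \<Rightarrow> 'm \<Rightarrow> 'm" where
  "tadd C A B f g = dAdd C f g"

definition tdag :: "('o,'m) dacat \<Rightarrow> 'o \<Rightarrow> 'o \<Rightarrow> 'm \<Rightarrow> 'm" where
  "tdag C A B f = dDag C f"

locale dagger_additive =
  fixes C :: "('o,'m) dacat"
  assumes dagger_additive: "is_dagger_additive C"
begin

lemma category: "is_category C"
  using dagger_additive unfolding is_dagger_additive_def by (elim conjE) assumption

lemma hom_group:
  "\<forall>A\<in>cObj C. \<forall>B\<in>cObj C.
     dZero C A B \<in> cHom C A B \<and>
     (\<forall>f\<in>cHom C A B. \<forall>g\<in>cHom C A B. dAdd C f g \<in> cHom C A B \<and> dAdd C f g = dAdd C g f) \<and>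
     (\<forall>f\<in>cHom C A B. \<forall>g\<in>cHom C A B. \<forall>h\<in>cHom C A B.
         dAdd C (dAdd C f g) h = dAdd C f (dAdd C g h)) \<and>
     (\<forall>f\<in>cHom C A B. dAdd C (dZero C A B) f = f) \<and>
     (\<forall>f\<in>cHom C A B. dNeg C f \<in> cHom C A B \<and> dAdd C f (dNeg C f) = dZero C A B)"
  using dagger_additive unfolding is_dagger_additive_def by (elim conjE) assumption

lemma comp_bilinear:
  "\<forall>A\<in>cObj C. \<forall>B\<in>cObj C. \<forall>D\<in>cObj C.
     \<forall>f\<in>cHom C A B. \<forall>f'\<in>cHom C A B. \<forall>g\<in>cHom C B D. \<forall>g'\<in>cHom C B D.
       cComp C (dAdd C g g') f = dAdd C (cComp C g f) (cComp C g' f) \<and>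
       cComp C g (dAdd C f f') = dAdd C (cComp C g f) (cComp C g f')"
  using dagger_additive unfolding is_dagger_additive_def by (elim conjE) assumption

lemma dagger:
  "(\<forall>A\<in>cObj C. \<forall>B\<in>cObj C. \<forall>f\<in>cHom C A B. dDag C f \<in> cHom C B A \<and> dDag C (dDag C f) = f) \<and>
   (\<forall>A\<in>cObj C. \<forall>B\<in>cObj C. \<forall>D\<in>cObj C. \<forall>f\<in>cHom C A B. \<forall>g\<in>cHom C B D.
     dDag C (cComp C g f) = cComp C (dDag C f) (dDag C g)) \<and>
   (\<forall>A\<in>cObj C. \<forall>B\<in>cObj C. \<forall>f\<in>cHom C A B. \<forall>g\<in>cHom C A B.
     dDag C (dAdd C f g) = dAdd C (dDag C f) (dDag C g))"
  using dagger_additive unfolding is_dagger_additive_def by (elim conjE) (intro conjI; assumption)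

lemma biprod_laws:
  "\<forall>A\<in>cObj C. \<forall>B\<in>cObj C.
     dBp C A B \<in> cObj C \<and>
     dIn1 C A B \<in> cHom C A (dBp C A B) \<and> dIn2 C A B \<in> cHom C B (dBp C A B) \<and>
     dPr1 C A B \<in> cHom C (dBp C A B) A \<and> dPr2 C A B \<in> cHom C (dBp C A B) B \<and>
     cComp C (dPr1 C A B) (dIn1 C A B) = cId C A \<and>
     cComp C (dPr2 C A B) (dIn2 C A B) = cId C B \<and>
     cComp C (dPr1 C A B) (dIn2 C A B) = dZero C B A \<and>
     cComp C (dPr2 C A B) (dIn1 C A B) = dZero C A B \<and>
     dAdd C (cComp C (dIn1 C A B) (dPr1 C A B)) (cComp C (dIn2 C A B) (dPr2 C A B))
       = cId C (dBp C A B) \<and>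
     dDag C (dPr1 C A B) = dIn1 C A B \<and> dDag C (dPr2 C A B) = dIn2 C A B"
  using dagger_additive unfolding is_dagger_additive_def by (elim conjE) assumption

lemma id_hom [simp]: "A \<in> cObj C \<Longrightarrow> cId C A \<in> cHom C A A"
  using category unfolding is_category_def by blast

lemma tcomp_hom [simp]:
  "\<lbrakk>A \<in> cObj C; B \<in> cObj C; E \<in> cObj C; f \<in> cHom C A B; g \<in> cHom C B E\<rbrakk>
    \<Longrightarrow> tcomp C A B E g f \<in> cHom C A E"
  using category unfolding is_category_def tcomp_def by blast

lemma tcomp_assoc [simp]:
  "\<lbrakk>A \<in> cObj C; B \<in> cObj C; E \<in> cObj C; F \<in> cObj C;
    f \<in> cHom C A B; g \<in> cHom C B E; h \<in> cHom C E F\<rbrakk>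
    \<Longrightarrow> tcomp C A B F (tcomp C B E F h g) f = tcomp C A E F h (tcomp C A B E g f)"
  using category unfolding is_category_def tcomp_def by metis

lemma tcomp_id_left [simp]:
  "\<lbrakk>A \<in> cObj C; B \<in> cObj C; f \<in> cHom C A B\<rbrakk> \<Longrightarrow> tcomp C A B B (cId C B) f = f"
  using category unfolding is_category_def tcomp_def by blast

lemma tcomp_id_right [simp]:
  "\<lbrakk>A \<in> cObj C; B \<in> cObj C; f \<in> cHom C A B\<rbrakk> \<Longrightarrow> tcomp C A A B f (cId C A) = f"
  using category unfolding is_category_def tcomp_def by blast

lemma zero_hom [simp]: "\<lbrakk>A \<in> cObj C; B \<in> cObj C\<rbrakk> \<Longrightarrow> dZero C A B \<in> cHom C A B"
  using hom_group by blast

lemma tadd_hom [simp]: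
  "\<lbrakk>A \<in> cObj C; B \<in> cObj C; f \<in> cHom C A B; g \<in> cHom C A B\<rbrakk> \<Longrightarrow> tadd C A B f g \<in> cHom C A B"
  using hom_group unfolding tadd_def by blast

lemma tadd_commute:
  "\<lbrakk>A \<in> cObj C; B \<in> cObj C; f \<in> cHom C A B; g \<in> cHom C A B\<rbrakk> \<Longrightarrow> tadd C A B f g = tadd C A B g f"
  using hom_group unfolding tadd_def by blast

lemma tadd_assoc:
  "\<lbrakk>A \<in> cObj C; B \<in> cObj C; f \<in> cHom C A B; g \<in> cHom C A B; h \<in> cHom C A B\<rbrakk>
    \<Longrightarrow> tadd C A B (tadd C A B f g) h = tadd C A B f (tadd C A B g h)"
  using hom_group unfolding tadd_def by blast

lemma tadd_zero_left [simp]: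
  "\<lbrakk>A \<in> cObj C; B \<in> cObj C; f \<in> cHom C A B\<rbrakk> \<Longrightarrow> tadd C A B (dZero C A B) f = f"
  using hom_group unfolding tadd_def by blast

lemma tadd_zero_right [simp]:
  "\<lbrakk>A \<in> cObj C; B \<in> cObj C; f \<in> cHom C A B\<rbrakk> \<Longrightarrow> tadd C A B f (dZero C A B) = f"
  by (metis tadd_zero_left tadd_commute zero_hom)

lemma tadd_idem_imp_zero:
  assumes "A \<in> cObj C" "B \<in> cObj C" "t \<in> cHom C A B" "tadd C A B t t = t"
  shows "t = dZero C A B"
proof -
  have neg: "dNeg C t \<in> cHom C A B" "tadd C A B t (dNeg C t) = dZero C A B"
    using hom_group assms(1-3) unfolding tadd_def by blast+
  have "t = tadd C A B t (tadd C A B t (dNeg C t))" using neg assms(1-3) by simp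
  also have "\<dots> = tadd C A B (tadd C A B t t) (dNeg C t)"
    using neg assms(1-3) by (simp add: tadd_assoc)
  also have "\<dots> = dZero C A B" using neg assms by simp
  finally show ?thesis .
qed

lemma tcomp_tadd_left [simp]:
  "\<lbrakk>A \<in> cObj C; B \<in> cObj C; E \<in> cObj C; f \<in> cHom C A B; g \<in> cHom C B E; g' \<in> cHom C B E\<rbrakk>
    \<Longrightarrow> tcomp C A B E (tadd C B E g g') f = tadd C A E (tcomp C A B E g f) (tcomp C A B E g' f)"
  using comp_bilinear unfolding tadd_def tcomp_def by blast

lemma tcomp_tadd_right [simp]:
  "\<lbrakk>A \<in> cObj C; B \<in> cObj C; E \<in> cObj C; f \<in> cHom C A B; f' \<in> cHom C A B; g \<in> cHom C B E\<rbrakk>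
    \<Longrightarrow> tcomp C A B E g (tadd C A B f f') = tadd C A E (tcomp C A B E g f) (tcomp C A B E g f')"
  using comp_bilinear unfolding tadd_def tcomp_def by blast

lemma tcomp_zero_left [simp]:
  assumes "A \<in> cObj C" "B \<in> cObj C" "E \<in> cObj C" "f \<in> cHom C A B"
  shows "tcomp C A B E (dZero C B E) f = dZero C A E"
  using assms tcomp_tadd_left[of A B E f "dZero C B E" "dZero C B E"]
  by (intro tadd_idem_imp_zero) simp_all

lemma tcomp_zero_right [simp]:
  assumes "A \<in> cObj C" "B \<in> cObj C" "E \<in> cObj C" "g \<in> cHom C B E"
  shows "tcomp C A B E g (dZero C A B) = dZero C A E"
  using assms tcomp_tadd_right[of A B E "dZero C A B" "dZero C A B" g]
  by (intro tadd_idem_imp_zero) simp_all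

lemma tdag_hom [simp]:
  "\<lbrakk>A \<in> cObj C; B \<in> cObj C; f \<in> cHom C A B\<rbrakk> \<Longrightarrow> tdag C A B f \<in> cHom C B A"
  using dagger unfolding tdag_def by blast

lemma tdag_tdag [simp]:
  "\<lbrakk>A \<in> cObj C; B \<in> cObj C; f \<in> cHom C A B\<rbrakk> \<Longrightarrow> tdag C B A (tdag C A B f) = f"
  using dagger unfolding tdag_def by blast

lemma tdag_tcomp [simp]:
  "\<lbrakk>A \<in> cObj C; B \<in> cObj C; E \<in> cObj C; f \<in> cHom C A B; g \<in> cHom C B E\<rbrakk>
    \<Longrightarrow> tdag C A E (tcomp C A B E g f) = tcomp C E B A (tdag C A B f) (tdag C B E g)"
  using dagger unfolding tdag_def tcomp_def by blast

lemma tdag_tadd [simp]: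
  "\<lbrakk>A \<in> cObj C; B \<in> cObj C; f \<in> cHom C A B; g \<in> cHom C A B\<rbrakk>
    \<Longrightarrow> tdag C A B (tadd C A B f g) = tadd C B A (tdag C A B f) (tdag C A B g)"
  using dagger unfolding tdag_def tadd_def by blast

lemma tdag_zero [simp]:
  assumes "A \<in> cObj C" "B \<in> cObj C"
  shows "tdag C A B (dZero C A B) = dZero C B A"
  using assms tdag_tadd[of A B "dZero C A B" "dZero C A B"]
  by (intro tadd_idem_imp_zero) simp_all

lemma zero_obj [simp]: "dZObj C \<in> cObj C"
  using dagger_additive unfolding is_dagger_additive_def by (elim conjE)

lemma id_zero_obj: "cId C (dZObj C) = dZero C (dZObj C) (dZObj C)"
  using dagger_additive unfolding is_dagger_additive_def by (elim conjE)

lemma biprod: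
  assumes "A \<in> cObj C" "B \<in> cObj C"
  shows "dBp C A B \<in> cObj C \<and>
    dIn1 C A B \<in> cHom C A (dBp C A B) \<and> dIn2 C A B \<in> cHom C B (dBp C A B) \<and>
    dPr1 C A B \<in> cHom C (dBp C A B) A \<and> dPr2 C A B \<in> cHom C (dBp C A B) B \<and>
    tcomp C A (dBp C A B) A (dPr1 C A B) (dIn1 C A B) = cId C A \<and>
    tcomp C B (dBp C A B) B (dPr2 C A B) (dIn2 C A B) = cId C B \<and>
    tcomp C B (dBp C A B) A (dPr1 C A B) (dIn2 C A B) = dZero C B A \<and>
    tcomp C A (dBp C A B) B (dPr2 C A B) (dIn1 C A B) = dZero C A B \<and>
    tadd C (dBp C A B) (dBp C A B)
      (tcomp C (dBp C A B) A (dBp C A B) (dIn1 C A B) (dPr1 C A B))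
      (tcomp C (dBp C A B) B (dBp C A B) (dIn2 C A B) (dPr2 C A B)) = cId C (dBp C A B) \<and>
    tdag C (dBp C A B) A (dPr1 C A B) = dIn1 C A B \<and> tdag C (dBp C A B) B (dPr2 C A B) = dIn2 C A B"
  using biprod_laws assms unfolding tcomp_def tadd_def tdag_def by blast

lemma biprod_obj [simp]: "\<lbrakk>A \<in> cObj C; B \<in> cObj C\<rbrakk> \<Longrightarrow> dBp C A B \<in> cObj C"
  and in1_hom [simp]: "\<lbrakk>A \<in> cObj C; B \<in> cObj C\<rbrakk> \<Longrightarrow> dIn1 C A B \<in> cHom C A (dBp C A B)"
  and in2_hom [simp]: "\<lbrakk>A \<in> cObj C; B \<in> cObj C\<rbrakk> \<Longrightarrow> dIn2 C A B \<in> cHom C B (dBp C A B)"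
  and pr1_hom [simp]: "\<lbrakk>A \<in> cObj C; B \<in> cObj C\<rbrakk> \<Longrightarrow> dPr1 C A B \<in> cHom C (dBp C A B) A"
  and pr2_hom [simp]: "\<lbrakk>A \<in> cObj C; B \<in> cObj C\<rbrakk> \<Longrightarrow> dPr2 C A B \<in> cHom C (dBp C A B) B"
  using biprod by blast+

lemma pr1_in1 [simp]:
  "\<lbrakk>A \<in> cObj C; B \<in> cObj C\<rbrakk> \<Longrightarrow> tcomp C A (dBp C A B) A (dPr1 C A B) (dIn1 C A B) = cId C A"
  and pr2_in2 [simp]:
  "\<lbrakk>A \<in> cObj C; B \<in> cObj C\<rbrakk> \<Longrightarrow> tcomp C B (dBp C A B) B (dPr2 C A B) (dIn2 C A B) = cId C B"
  and pr1_in2 [simp]: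
  "\<lbrakk>A \<in> cObj C; B \<in> cObj C\<rbrakk> \<Longrightarrow> tcomp C B (dBp C A B) A (dPr1 C A B) (dIn2 C A B) = dZero C B A"
  and pr2_in1 [simp]:
  "\<lbrakk>A \<in> cObj C; B \<in> cObj C\<rbrakk> \<Longrightarrow> tcomp C A (dBp C A B) B (dPr2 C A B) (dIn1 C A B) = dZero C A B"
  and tdag_pr1 [simp]: "\<lbrakk>A \<in> cObj C; B \<in> cObj C\<rbrakk> \<Longrightarrow> tdag C (dBp C A B) A (dPr1 C A B) = dIn1 C A B"
  and tdag_pr2 [simp]: "\<lbrakk>A \<in> cObj C; B \<in> cObj C\<rbrakk> \<Longrightarrow> tdag C (dBp C A B) B (dPr2 C A B) = dIn2 C A B"
  using biprod by blast+

lemma biprod_id: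
  "\<lbrakk>A \<in> cObj C; B \<in> cObj C\<rbrakk> \<Longrightarrow>
    tadd C (dBp C A B) (dBp C A B)
      (tcomp C (dBp C A B) A (dBp C A B) (dIn1 C A B) (dPr1 C A B))
      (tcomp C (dBp C A B) B (dBp C A B) (dIn2 C A B) (dPr2 C A B)) = cId C (dBp C A B)"
  using biprod by blast

lemma tdag_in1 [simp]: "\<lbrakk>A \<in> cObj C; B \<in> cObj C\<rbrakk> \<Longrightarrow> tdag C A (dBp C A B) (dIn1 C A B) = dPr1 C A B"
  by (metis tdag_pr1 tdag_tdag pr1_hom biprod_obj)

lemma tdag_in2 [simp]: "\<lbrakk>A \<in> cObj C; B \<in> cObj C\<rbrakk> \<Longrightarrow> tdag C B (dBp C A B) (dIn2 C A B) = dPr2 C A B"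
  by (metis tdag_pr2 tdag_tdag pr2_hom biprod_obj)

lemma pr1_in1_tcomp [simp]:
  "\<lbrakk>A \<in> cObj C; B \<in> cObj C; Z \<in> cObj C; f \<in> cHom C Z A\<rbrakk> \<Longrightarrow>
    tcomp C Z (dBp C A B) A (dPr1 C A B) (tcomp C Z A (dBp C A B) (dIn1 C A B) f) = f"
  by (metis pr1_in1 tcomp_assoc tcomp_id_left in1_hom pr1_hom biprod_obj)

lemma pr2_in2_tcomp [simp]:
  "\<lbrakk>A \<in> cObj C; B \<in> cObj C; Z \<in> cObj C; f \<in> cHom C Z B\<rbrakk> \<Longrightarrow>
    tcomp C Z (dBp C A B) B (dPr2 C A B) (tcomp C Z B (dBp C A B) (dIn2 C A B) f) = f"
  by (metis pr2_in2 tcomp_assoc tcomp_id_left in2_hom pr2_hom biprod_obj)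

lemma pr1_in2_tcomp [simp]:
  "\<lbrakk>A \<in> cObj C; B \<in> cObj C; Z \<in> cObj C; f \<in> cHom C Z B\<rbrakk> \<Longrightarrow>
    tcomp C Z (dBp C A B) A (dPr1 C A B) (tcomp C Z B (dBp C A B) (dIn2 C A B) f) = dZero C Z A"
  by (metis pr1_in2 tcomp_assoc tcomp_zero_left in2_hom pr1_hom biprod_obj)

lemma pr2_in1_tcomp [simp]:
  "\<lbrakk>A \<in> cObj C; B \<in> cObj C; Z \<in> cObj C; f \<in> cHom C Z A\<rbrakk> \<Longrightarrow>
    tcomp C Z (dBp C A B) B (dPr2 C A B) (tcomp C Z A (dBp C A B) (dIn1 C A B) f) = dZero C Z B"
  by (metis pr2_in1 tcomp_assoc tcomp_zero_left in1_hom pr2_hom biprod_obj)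

lemma eq_if_components_eq_into:
  assumes obj: "Q \<in> cObj C" "A \<in> cObj C" "B \<in> cObj C" "Z \<in> cObj C"
    and hom: "i1 \<in> cHom C A Q" "p1 \<in> cHom C Q A" "i2 \<in> cHom C B Q" "p2 \<in> cHom C Q B"
    and decomp: "tadd C Q Q (tcomp C Q A Q i1 p1) (tcomp C Q B Q i2 p2) = cId C Q"
    and fg: "f \<in> cHom C Z Q" "g \<in> cHom C Z Q"
    and eq1: "tcomp C Z Q A p1 f = tcomp C Z Q A p1 g"
    and eq2: "tcomp C Z Q B p2 f = tcomp C Z Q B p2 g"
  shows "f = g"
proof -
  have "f = tcomp C Z Q Q (tadd C Q Q (tcomp C Q A Q i1 p1) (tcomp C Q B Q i2 p2)) f"
    using decomp obj fg by simp
  also have "\<dots> = tadd C Z Q (tcomp C Z A Q i1 (tcomp C Z Q A p1 f)) (tcomp C Z B Q i2 (tcomp C Z Q B p2 f))"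
    using obj hom fg by simp
  also have "\<dots> = tadd C Z Q (tcomp C Z A Q i1 (tcomp C Z Q A p1 g)) (tcomp C Z B Q i2 (tcomp C Z Q B p2 g))"
    using eq1 eq2 by simp
  also have "\<dots> = tcomp C Z Q Q (tadd C Q Q (tcomp C Q A Q i1 p1) (tcomp C Q B Q i2 p2)) g"
    using obj hom fg by simp
  also have "\<dots> = g" using decomp obj fg by simp
  finally show ?thesis .
qed

lemma biprod_eq_into:
  "\<lbrakk>A \<in> cObj C; B \<in> cObj C; Z \<in> cObj C; f \<in> cHom C Z (dBp C A B); g \<in> cHom C Z (dBp C A B);
    tcomp C Z (dBp C A B) A (dPr1 C A B) f = tcomp C Z (dBp C A B) A (dPr1 C A B) g;
    tcomp C Z (dBp C A B) B (dPr2 C A B) f = tcomp C Z (dBp C A B) B (dPr2 C A B) g\<rbrakk> \<Longrightarrow> f = g"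
  by (rule eq_if_components_eq_into[OF _ _ _ _ in1_hom pr1_hom in2_hom pr2_hom biprod_id]) auto

lemma dagger_positive_zero [simp]:
  assumes "B \<in> cObj C"
  shows "dagger_positive C B (dZero C B B)"
proof -
  have "tcomp C B B B (tdag C B B (dZero C B B)) (dZero C B B) = dZero C B B"
    using assms by simp
  then show ?thesis
    unfolding dagger_positive_def tcomp_def tdag_def using assms
    by (intro bexI[of _ B] bexI[of _ "dZero C B B"]) auto
qed

end

lemma bpmap_expand:
  "bpmap C A B A' B' f g = tadd C (dBp C A B) (dBp C A' B')
     (tcomp C (dBp C A B) A' (dBp C A' B') (dIn1 C A' B') (tcomp C (dBp C A B) A A' f (dPr1 C A B)))
     (tcomp C (dBp C A B) B' (dBp C A' B') (dIn2 C A' B') (tcomp C (dBp C A B) B B' g (dPr2 C A B)))"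
  unfolding bpmap_def tadd_def tcomp_def ..

lemma tup_expand:
  "tup C A B f g = tadd C Z (dBp C A B)
     (tcomp C Z A (dBp C A B) (dIn1 C A B) f) (tcomp C Z B (dBp C A B) (dIn2 C A B) g)"
  unfolding tup_def tadd_def tcomp_def ..

(* The domain A does not occur in the value; it only guides rewriting. *)
definition gauss_det :: "('o,'m) dacat \<Rightarrow> 'o \<Rightarrow> 'o \<Rightarrow> 'o \<Rightarrow> 'm \<Rightarrow> 'm \<times> 'm \<times> 'm" where
  "gauss_det C X A B f = (f, dZero C B B, dZero C X B)"

definition biprod_assoc :: "('o,'m) dacat \<Rightarrow> 'o \<Rightarrow> 'o \<Rightarrow> 'o \<Rightarrow> 'm" where
  "biprod_assoc C A B E = tadd C (dBp C (dBp C A B) E) (dBp C A (dBp C B E))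
     (tcomp C (dBp C (dBp C A B) E) A (dBp C A (dBp C B E)) (dIn1 C A (dBp C B E))
        (tcomp C (dBp C (dBp C A B) E) (dBp C A B) A (dPr1 C A B) (dPr1 C (dBp C A B) E)))
     (tcomp C (dBp C (dBp C A B) E) (dBp C B E) (dBp C A (dBp C B E)) (dIn2 C A (dBp C B E))
        (tadd C (dBp C (dBp C A B) E) (dBp C B E)
          (tcomp C (dBp C (dBp C A B) E) B (dBp C B E) (dIn1 C B E)
             (tcomp C (dBp C (dBp C A B) E) (dBp C A B) B (dPr2 C A B) (dPr1 C (dBp C A B) E)))
          (tcomp C (dBp C (dBp C A B) E) E (dBp C B E) (dIn2 C B E) (dPr2 C (dBp C A B) E))))"

lemma gauss_det_eq_iff [simp]: "gauss_det C X A B f = gauss_det C X A B g \<longleftrightarrow> f = g"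
  unfolding gauss_det_def by simp

lemma gauss_obj [simp]: "cObj (gauss C X) = cObj C"
  and gauss_tens [simp]: "mTens (gauss C X) = dBp C"
  and gauss_unit [simp]: "mUnit (gauss C X) = dZObj C"
  and gauss_map_triple [simp]: "gauss_map Fm (f, p, x) = (Fm f, Fm p, Fm x)"
  unfolding gauss_def gauss_map_def by simp_all

lemma gauss_hom:
  "(f, p, x) \<in> cHom (gauss C X) A B \<longleftrightarrow>
     f \<in> cHom C A B \<and> p \<in> cHom C B B \<and> dagger_positive C B p \<and> x \<in> cHom C X B"
  unfolding gauss_def by simp

lemma gauss_comp:
  "cComp (gauss C X) (g, q, y) (f, p, x) =
     (tcomp C A B E g f,
      tadd C E E q (tcomp C E B E g (tcomp C E B B p (tdag C B E g))),
      tadd C X E y (tcomp C X B E g x))"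
  unfolding gauss_def tcomp_def tadd_def tdag_def by simp

lemma gauss_tensor:
  "mTensM (gauss C X) A B A' B' (f, p, x) (g, q, y) =
     (bpmap C A B A' B' f g, bpmap C A' B' A' B' p q, tup C A' B' x y)"
  unfolding gauss_def by simp

lemma gauss_id_det: "cId (gauss C X) A = gauss_det C X A A (cId C A)"
  and gauss_assoc_det: "mAssoc (gauss C X) A B E =
    gauss_det C X (dBp C (dBp C A B) E) (dBp C A (dBp C B E)) (biprod_assoc C A B E)"
  and gauss_lunit_det: "mLUnit (gauss C X) A = gauss_det C X (dBp C (dZObj C) A) A (dPr2 C (dZObj C) A)"
  and gauss_runit_det: "mRUnit (gauss C X) A = gauss_det C X (dBp C A (dZObj C)) A (dPr1 C A (dZObj C))"
  and gauss_swap_det: "mSym (gauss C X) A B =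
    gauss_det C X (dBp C A B) (dBp C B A) (tup C B A (dPr2 C A B) (dPr1 C A B))"
  and gauss_copy_det: "mCopy (gauss C X) A = gauss_det C X A (dBp C A A) (tup C A A (cId C A) (cId C A))"
  and gauss_del_det: "mDel (gauss C X) A = gauss_det C X A (dZObj C) (dZero C A (dZObj C))"
  unfolding gauss_def gauss_det_def biprod_assoc_def tup_def tadd_def tcomp_def by simp_all

context dagger_additive
begin

lemma gauss_det_hom [simp]:
  "\<lbrakk>X \<in> cObj C; B \<in> cObj C\<rbrakk> \<Longrightarrow> gauss_det C X A B f \<in> cHom (gauss C X) A B \<longleftrightarrow> f \<in> cHom C A B"
  unfolding gauss_det_def gauss_hom by simp

lemma gauss_det_comp [simp]:
  "\<lbrakk>X \<in> cObj C; A \<in> cObj C; B \<in> cObj C; E \<in> cObj C; f \<in> cHom C A B; g \<in> cHom C B E\<rbrakk> \<Longrightarrow>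
    cComp (gauss C X) (gauss_det C X B E g) (gauss_det C X A B f) = gauss_det C X A E (tcomp C A B E g f)"
  unfolding gauss_det_def gauss_comp[where A = A and B = B and E = E] by simp

lemma gauss_det_comp_left:
  "\<lbrakk>X \<in> cObj C; A \<in> cObj C; B \<in> cObj C; E \<in> cObj C;
    f \<in> cHom C A B; p \<in> cHom C B B; x \<in> cHom C X B; g \<in> cHom C B E\<rbrakk> \<Longrightarrow>
    cComp (gauss C X) (gauss_det C X B E g) (f, p, x) =
      (tcomp C A B E g f, tcomp C E B E g (tcomp C E B B p (tdag C B E g)), tcomp C X B E g x)"
  unfolding gauss_det_def gauss_comp[where A = A and B = B and E = E] by simp

lemma gauss_comp_det_right:
  "\<lbrakk>X \<in> cObj C; A \<in> cObj C; B \<in> cObj C; E \<in> cObj C;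
    f \<in> cHom C A B; g \<in> cHom C B E; q \<in> cHom C E E; y \<in> cHom C X E\<rbrakk> \<Longrightarrow>
    cComp (gauss C X) (g, q, y) (gauss_det C X A B f) = (tcomp C A B E g f, q, y)"
  unfolding gauss_det_def gauss_comp[where A = A and B = B and E = E] by simp

lemma gauss_tensor_det [simp]:
  "\<lbrakk>X \<in> cObj C; A \<in> cObj C; B \<in> cObj C; A' \<in> cObj C; B' \<in> cObj C\<rbrakk> \<Longrightarrow>
    mTensM (gauss C X) A B A' B' (gauss_det C X A A' f) (gauss_det C X B B' g) =
      gauss_det C X (dBp C A B) (dBp C A' B') (bpmap C A B A' B' f g)"
  unfolding gauss_det_def gauss_tensor bpmap_expand tup_expand[where Z = X] by simp

end

locale dagger_additive_functor =
  C: dagger_additive C + D: dagger_additive D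
  for C :: "('o,'m) dacat" and D :: "('p,'n) dacat" +
  fixes Fo :: "'o \<Rightarrow> 'p" and Fm :: "'m \<Rightarrow> 'n"
  assumes dagger_additive_functor: "is_dagger_additive_functor C D Fo Fm"
begin

lemma F_obj [simp]: "A \<in> cObj C \<Longrightarrow> Fo A \<in> cObj D"
  using dagger_additive_functor unfolding is_dagger_additive_functor_def by blast

lemma F_hom [simp]: "\<lbrakk>A \<in> cObj C; B \<in> cObj C; f \<in> cHom C A B\<rbrakk> \<Longrightarrow> Fm f \<in> cHom D (Fo A) (Fo B)"
  using dagger_additive_functor unfolding is_dagger_additive_functor_def by blast

lemma F_id [simp]: "A \<in> cObj C \<Longrightarrow> Fm (cId C A) = cId D (Fo A)"
  using dagger_additive_functor unfolding is_dagger_additive_functor_def by blast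

lemma F_tcomp [simp]:
  "\<lbrakk>A \<in> cObj C; B \<in> cObj C; E \<in> cObj C; f \<in> cHom C A B; g \<in> cHom C B E\<rbrakk>
    \<Longrightarrow> Fm (tcomp C A B E g f) = tcomp D (Fo A) (Fo B) (Fo E) (Fm g) (Fm f)"
  using dagger_additive_functor unfolding is_dagger_additive_functor_def tcomp_def by blast

(* Oriented so that daggers move into C, where the biproduct laws for daggers apply. *)
lemma F_tdag [simp]:
  "\<lbrakk>A \<in> cObj C; B \<in> cObj C; f \<in> cHom C A B\<rbrakk> \<Longrightarrow> tdag D (Fo A) (Fo B) (Fm f) = Fm (tdag C A B f)"
  using dagger_additive_functor unfolding is_dagger_additive_functor_def tdag_def by metis

lemma F_tadd [simp]:
  "\<lbrakk>A \<in> cObj C; B \<in> cObj C; f \<in> cHom C A B; g \<in> cHom C A B\<rbrakk>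
    \<Longrightarrow> Fm (tadd C A B f g) = tadd D (Fo A) (Fo B) (Fm f) (Fm g)"
  using dagger_additive_functor unfolding is_dagger_additive_functor_def tadd_def by blast

lemma F_zero [simp]:
  assumes "A \<in> cObj C" "B \<in> cObj C"
  shows "Fm (dZero C A B) = dZero D (Fo A) (Fo B)"
  using assms F_tadd[of A B "dZero C A B" "dZero C A B"]
  by (intro D.tadd_idem_imp_zero) simp_all

lemma F_id_zero_obj: "cId D (Fo (dZObj C)) = dZero D (Fo (dZObj C)) (Fo (dZObj C))"
  by (metis C.zero_obj C.id_zero_obj F_id F_zero)

lemma F_dagger_positive:
  assumes "B \<in> cObj C" "dagger_positive C B p"
  shows "dagger_positive D (Fo B) (Fm p)"
proof -
  obtain E \<phi> where E: "E \<in> cObj C" "\<phi> \<in> cHom C B E" "p = tcomp C B E B (tdag C B E \<phi>) \<phi>"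
    using assms(2) unfolding dagger_positive_def tcomp_def tdag_def by blast
  then have "Fm p = tcomp D (Fo B) (Fo E) (Fo B) (tdag D (Fo B) (Fo E) (Fm \<phi>)) (Fm \<phi>)"
    using assms(1) by simp
  then show ?thesis
    unfolding dagger_positive_def using E assms(1)
    by (intro bexI[of _ "Fo E"] bexI[of _ "Fm \<phi>"]) (auto simp: tcomp_def tdag_def)
qed

lemma F_pr1_in1_tcomp [simp]:
  "\<lbrakk>A \<in> cObj C; B \<in> cObj C; Z \<in> cObj D; f \<in> cHom D Z (Fo A)\<rbrakk> \<Longrightarrow>
    tcomp D Z (Fo (dBp C A B)) (Fo A) (Fm (dPr1 C A B))
      (tcomp D Z (Fo A) (Fo (dBp C A B)) (Fm (dIn1 C A B)) f) = f"
  by (metis C.pr1_in1 F_tcomp F_id D.tcomp_assoc D.tcomp_id_left F_hom F_obj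
      C.in1_hom C.pr1_hom C.biprod_obj)

lemma F_pr2_in2_tcomp [simp]:
  "\<lbrakk>A \<in> cObj C; B \<in> cObj C; Z \<in> cObj D; f \<in> cHom D Z (Fo B)\<rbrakk> \<Longrightarrow>
    tcomp D Z (Fo (dBp C A B)) (Fo B) (Fm (dPr2 C A B))
      (tcomp D Z (Fo B) (Fo (dBp C A B)) (Fm (dIn2 C A B)) f) = f"
  by (metis C.pr2_in2 F_tcomp F_id D.tcomp_assoc D.tcomp_id_left F_hom F_obj
      C.in2_hom C.pr2_hom C.biprod_obj)

lemma F_pr1_in2_tcomp [simp]:
  "\<lbrakk>A \<in> cObj C; B \<in> cObj C; Z \<in> cObj D; f \<in> cHom D Z (Fo B)\<rbrakk> \<Longrightarrow>
    tcomp D Z (Fo (dBp C A B)) (Fo A) (Fm (dPr1 C A B))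
      (tcomp D Z (Fo B) (Fo (dBp C A B)) (Fm (dIn2 C A B)) f) = dZero D Z (Fo A)"
  by (metis C.pr1_in2 F_tcomp F_zero D.tcomp_assoc D.tcomp_zero_left F_hom F_obj
      C.in2_hom C.pr1_hom C.biprod_obj)

lemma F_pr2_in1_tcomp [simp]:
  "\<lbrakk>A \<in> cObj C; B \<in> cObj C; Z \<in> cObj D; f \<in> cHom D Z (Fo A)\<rbrakk> \<Longrightarrow>
    tcomp D Z (Fo (dBp C A B)) (Fo B) (Fm (dPr2 C A B))
      (tcomp D Z (Fo A) (Fo (dBp C A B)) (Fm (dIn1 C A B)) f) = dZero D Z (Fo B)"
  by (metis C.pr2_in1 F_tcomp F_zero D.tcomp_assoc D.tcomp_zero_left F_hom F_obj
      C.in1_hom C.pr2_hom C.biprod_obj)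

lemma F_biprod_eq_into:
  assumes "A \<in> cObj C" "B \<in> cObj C" "Z \<in> cObj D"
    and "f \<in> cHom D Z (Fo (dBp C A B))" "g \<in> cHom D Z (Fo (dBp C A B))"
    and "tcomp D Z (Fo (dBp C A B)) (Fo A) (Fm (dPr1 C A B)) f
       = tcomp D Z (Fo (dBp C A B)) (Fo A) (Fm (dPr1 C A B)) g"
    and "tcomp D Z (Fo (dBp C A B)) (Fo B) (Fm (dPr2 C A B)) f
       = tcomp D Z (Fo (dBp C A B)) (Fo B) (Fm (dPr2 C A B)) g"
  shows "f = g"
proof (rule D.eq_if_components_eq_into)
  show "tadd D (Fo (dBp C A B)) (Fo (dBp C A B))
      (tcomp D (Fo (dBp C A B)) (Fo A) (Fo (dBp C A B)) (Fm (dIn1 C A B)) (Fm (dPr1 C A B)))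
      (tcomp D (Fo (dBp C A B)) (Fo B) (Fo (dBp C A B)) (Fm (dIn2 C A B)) (Fm (dPr2 C A B)))
    = cId D (Fo (dBp C A B))"
    using arg_cong[OF C.biprod_id[OF assms(1,2)], of Fm] assms(1,2) by simp
qed (use assms in simp_all)

definition comparison :: "'o \<Rightarrow> 'o \<Rightarrow> 'n" where
  "comparison A B = tadd D (dBp D (Fo A) (Fo B)) (Fo (dBp C A B))
     (tcomp D (dBp D (Fo A) (Fo B)) (Fo A) (Fo (dBp C A B)) (Fm (dIn1 C A B)) (dPr1 D (Fo A) (Fo B)))
     (tcomp D (dBp D (Fo A) (Fo B)) (Fo B) (Fo (dBp C A B)) (Fm (dIn2 C A B)) (dPr2 D (Fo A) (Fo B)))"

definition comparison_inv :: "'o \<Rightarrow> 'o \<Rightarrow> 'n" where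
  "comparison_inv A B = tadd D (Fo (dBp C A B)) (dBp D (Fo A) (Fo B))
     (tcomp D (Fo (dBp C A B)) (Fo A) (dBp D (Fo A) (Fo B)) (dIn1 D (Fo A) (Fo B)) (Fm (dPr1 C A B)))
     (tcomp D (Fo (dBp C A B)) (Fo B) (dBp D (Fo A) (Fo B)) (dIn2 D (Fo A) (Fo B)) (Fm (dPr2 C A B)))"

lemma comparison_hom [simp]:
  "\<lbrakk>A \<in> cObj C; B \<in> cObj C\<rbrakk> \<Longrightarrow> comparison A B \<in> cHom D (dBp D (Fo A) (Fo B)) (Fo (dBp C A B))"
  unfolding comparison_def by simp

lemma comparison_inv_hom [simp]:
  "\<lbrakk>A \<in> cObj C; B \<in> cObj C\<rbrakk> \<Longrightarrow> comparison_inv A B \<in> cHom D (Fo (dBp C A B)) (dBp D (Fo A) (Fo B))"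
  unfolding comparison_inv_def by simp

lemma comparison_inv_comparison:
  "\<lbrakk>A \<in> cObj C; B \<in> cObj C\<rbrakk> \<Longrightarrow>
    tcomp D (dBp D (Fo A) (Fo B)) (Fo (dBp C A B)) (dBp D (Fo A) (Fo B)) (comparison_inv A B) (comparison A B)
    = cId D (dBp D (Fo A) (Fo B))"
  by (rule D.biprod_eq_into[of "Fo A" "Fo B" "dBp D (Fo A) (Fo B)"])
    (simp_all add: comparison_def comparison_inv_def)

lemma comparison_comparison_inv:
  "\<lbrakk>A \<in> cObj C; B \<in> cObj C\<rbrakk> \<Longrightarrow>
    tcomp D (Fo (dBp C A B)) (dBp D (Fo A) (Fo B)) (Fo (dBp C A B)) (comparison A B) (comparison_inv A B)
    = cId D (Fo (dBp C A B))"
  by (rule F_biprod_eq_into[of A B "Fo (dBp C A B)"])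
    (simp_all add: comparison_def comparison_inv_def)

lemma gauss_map_det [simp]:
  "\<lbrakk>X \<in> cObj C; B \<in> cObj C\<rbrakk> \<Longrightarrow>
    gauss_map Fm (gauss_det C X A B f) = gauss_det D (Fo X) (Fo A) (Fo B) (Fm f)"
  unfolding gauss_det_def by simp

definition gauss_comparison :: "'o \<Rightarrow> 'o \<Rightarrow> 'o \<Rightarrow> 'n \<times> 'n \<times> 'n" where
  "gauss_comparison X A B = gauss_det D (Fo X) (dBp D (Fo A) (Fo B)) (Fo (dBp C A B)) (comparison A B)"

definition gauss_unit_comparison :: "'o \<Rightarrow> 'n \<times> 'n \<times> 'n" where
  "gauss_unit_comparison X = gauss_det D (Fo X) (dZObj D) (Fo (dZObj C)) (dZero D (dZObj D) (Fo (dZObj C)))"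

context
  fixes X :: 'o
  assumes X: "X \<in> cObj C"
begin

lemma gauss_map_hom:
  assumes "A \<in> cObj C" "B \<in> cObj C" "f \<in> cHom (gauss C X) A B"
  shows "gauss_map Fm f \<in> cHom (gauss D (Fo X)) (Fo A) (Fo B)"
  using assms X by (cases f) (simp add: gauss_hom F_dagger_positive)

lemma gauss_map_id: "A \<in> cObj C \<Longrightarrow> gauss_map Fm (cId (gauss C X) A) = cId (gauss D (Fo X)) (Fo A)"
  using X by (simp add: gauss_id_det)

lemma gauss_map_comp:
  assumes "A \<in> cObj C" "B \<in> cObj C" "E \<in> cObj C"
    and "f \<in> cHom (gauss C X) A B" "g \<in> cHom (gauss C X) B E"
  shows "gauss_map Fm (cComp (gauss C X) g f) = cComp (gauss D (Fo X)) (gauss_map Fm g) (gauss_map Fm f)"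
  using assms X
  by (cases f, cases g)
    (simp add: gauss_hom gauss_comp[where C = C and A = A and B = B and E = E]
      gauss_comp[where C = D and A = "Fo A" and B = "Fo B" and E = "Fo E"])

lemma gauss_unit_comparison_iso:
  "is_iso (gauss D (Fo X)) (dZObj D) (Fo (dZObj C)) (gauss_unit_comparison X)"
  unfolding is_iso_def gauss_unit_comparison_def using X
  by (intro conjI bexI[of _ "gauss_det D (Fo X) (Fo (dZObj C)) (dZObj D) (dZero D (Fo (dZObj C)) (dZObj D))"])
    (simp_all add: gauss_id_det D.id_zero_obj F_id_zero_obj)

lemma gauss_comparison_iso:
  assumes "A \<in> cObj C" "B \<in> cObj C"
  shows "is_iso (gauss D (Fo X)) (dBp D (Fo A) (Fo B)) (Fo (dBp C A B)) (gauss_comparison X A B)"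
  unfolding is_iso_def gauss_comparison_def using X assms
  by (intro conjI bexI[of _ "gauss_det D (Fo X) (Fo (dBp C A B)) (dBp D (Fo A) (Fo B)) (comparison_inv A B)"])
    (simp_all add: gauss_id_det comparison_inv_comparison comparison_comparison_inv)

lemma gauss_comparison_natural:
  assumes "A \<in> cObj C" "B \<in> cObj C" "A' \<in> cObj C" "B' \<in> cObj C"
    and "f \<in> cHom (gauss C X) A A'" "g \<in> cHom (gauss C X) B B'"
  shows "cComp (gauss D (Fo X)) (gauss_map Fm (mTensM (gauss C X) A B A' B' f g)) (gauss_comparison X A B) =
    cComp (gauss D (Fo X)) (gauss_comparison X A' B')
      (mTensM (gauss D (Fo X)) (Fo A) (Fo B) (Fo A') (Fo B') (gauss_map Fm f) (gauss_map Fm g))"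
proof -
  obtain f1 p x where f: "f = (f1, p, x)" by (cases f)
  obtain g1 q y where g: "g = (g1, q, y)" by (cases g)
  show ?thesis
    using assms X unfolding f g
    by (simp add: gauss_hom gauss_tensor gauss_comparison_def comparison_def
        bpmap_expand tup_expand[where Z = X] tup_expand[where Z = "Fo X"]
        D.gauss_comp_det_right[where E = "Fo (dBp C A' B')"]
        D.gauss_det_comp_left[where A = "dBp D (Fo A) (Fo B)"])
qed

lemma gauss_comparison_assoc:
  assumes "A \<in> cObj C" "B \<in> cObj C" "E \<in> cObj C"
  shows "cComp (gauss D (Fo X)) (gauss_map Fm (mAssoc (gauss C X) A B E))
      (cComp (gauss D (Fo X)) (gauss_comparison X (dBp C A B) E)
        (mTensM (gauss D (Fo X)) (dBp D (Fo A) (Fo B)) (Fo E) (Fo (dBp C A B)) (Fo E)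
          (gauss_comparison X A B) (cId (gauss D (Fo X)) (Fo E)))) =
    cComp (gauss D (Fo X)) (gauss_comparison X A (dBp C B E))
      (cComp (gauss D (Fo X))
        (mTensM (gauss D (Fo X)) (Fo A) (dBp D (Fo B) (Fo E)) (Fo A) (Fo (dBp C B E))
          (cId (gauss D (Fo X)) (Fo A)) (gauss_comparison X B E))
        (mAssoc (gauss D (Fo X)) (Fo A) (Fo B) (Fo E)))"
  using assms X
  by (simp add: gauss_assoc_det gauss_id_det gauss_comparison_def comparison_def biprod_assoc_def
      bpmap_expand D.tadd_assoc)

lemma gauss_comparison_lunit:
  assumes "A \<in> cObj C"
  shows "cComp (gauss D (Fo X)) (gauss_map Fm (mLUnit (gauss C X) A))
      (cComp (gauss D (Fo X)) (gauss_comparison X (dZObj C) A)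
        (mTensM (gauss D (Fo X)) (dZObj D) (Fo A) (Fo (dZObj C)) (Fo A)
          (gauss_unit_comparison X) (cId (gauss D (Fo X)) (Fo A))))
    = mLUnit (gauss D (Fo X)) (Fo A)"
  using assms X
  by (simp add: gauss_lunit_det gauss_id_det gauss_comparison_def gauss_unit_comparison_def
      comparison_def bpmap_expand D.tadd_assoc)

lemma gauss_comparison_runit:
  assumes "A \<in> cObj C"
  shows "cComp (gauss D (Fo X)) (gauss_map Fm (mRUnit (gauss C X) A))
      (cComp (gauss D (Fo X)) (gauss_comparison X A (dZObj C))
        (mTensM (gauss D (Fo X)) (Fo A) (dZObj D) (Fo A) (Fo (dZObj C))
          (cId (gauss D (Fo X)) (Fo A)) (gauss_unit_comparison X)))
    = mRUnit (gauss D (Fo X)) (Fo A)"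
  using assms X
  by (simp add: gauss_runit_det gauss_id_det gauss_comparison_def gauss_unit_comparison_def
      comparison_def bpmap_expand D.tadd_assoc)

lemma gauss_comparison_swap:
  assumes "A \<in> cObj C" "B \<in> cObj C"
  shows "cComp (gauss D (Fo X)) (gauss_map Fm (mSym (gauss C X) A B)) (gauss_comparison X A B) =
    cComp (gauss D (Fo X)) (gauss_comparison X B A) (mSym (gauss D (Fo X)) (Fo A) (Fo B))"
  using assms X
  by (simp add: gauss_swap_det gauss_comparison_def comparison_def D.tadd_assoc D.tadd_commute
      tup_expand[where C = C and Z = "dBp C A B"] tup_expand[where C = D and Z = "dBp D (Fo A) (Fo B)"])

lemma gauss_map_copy:
  assumes "A \<in> cObj C"
  shows "gauss_map Fm (mCopy (gauss C X) A) =
    cComp (gauss D (Fo X)) (gauss_comparison X A A) (mCopy (gauss D (Fo X)) (Fo A))"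
  using assms X
  by (simp add: gauss_copy_det gauss_comparison_def comparison_def
      tup_expand[where C = C and Z = A] tup_expand[where C = D and Z = "Fo A"])

lemma gauss_map_del:
  assumes "A \<in> cObj C"
  shows "gauss_map Fm (mDel (gauss C X) A) =
    cComp (gauss D (Fo X)) (gauss_unit_comparison X) (mDel (gauss D (Fo X)) (Fo A))"
  using assms X by (simp add: gauss_del_det gauss_unit_comparison_def)

end

end

theorem mainTheorem5:
  fixes C :: "('o,'m) dacat" and D :: "('p,'n) dacat"
    and Fo :: "'o \<Rightarrow> 'p" and Fm :: "'m \<Rightarrow> 'n" and X :: 'o
  assumes "is_dagger_additive C" and "is_dagger_additive D"
    and "is_dagger_additive_functor C D Fo Fm"
    and "X \<in> cObj C"
  shows "is_markov_functor (gauss C X) (gauss D (Fo X)) Fo (gauss_map Fm)"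
proof -
  interpret dagger_additive_functor C D Fo Fm
    by unfold_locales (fact assms)+
  show ?thesis
    unfolding is_markov_functor_def gauss_obj gauss_tens gauss_unit
    by (intro conjI ballI exI[of _ "gauss_comparison X"] exI[of _ "gauss_unit_comparison X"])
      (simp_all add: assms(4) gauss_map_hom gauss_map_id gauss_map_comp gauss_unit_comparison_iso
        gauss_comparison_iso gauss_comparison_natural gauss_comparison_assoc gauss_comparison_lunit
        gauss_comparison_runit gauss_comparison_swap gauss_map_copy gauss_map_del)
qed

end
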